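(* Let $a>0$, $a\neq1$. Then the space of Killing vector fields on $M^{3}_{a}$ is the two-dimensional space spanned by $\partial_{\xi}$ and $\partial_{\mu}$.
   Context: $M^{3}_{a}:=\{(x,y,z,w)\in\mathbb{R}^{4}:x^{2}+y^{2}=a^{2}(1-z^{2}-w^{2})\}$ with the metric induced from $\mathbb{R}^{4}$; $\partial_{\xi}:=-y\partial_{x}+x\partial_{y}$ and $\partial_{\mu}:=-w\partial_{z}+z\partial_{w}$, restricted to $M^{3}_{a}$. A vector field $X$ is Killing if $g(\nabla_{V}X,W)=-g(\nabla_{W}X,V)$ for all vector fields $V,W$ ($\nabla$ the Levi-Civita connection). *)

theory Defs
  imports "HOL-Analysis.Analysis"
begin

definition Ma :: "real \<Rightarrow> (real^4) set" where
  "Ma a = {p. (p$1)^2 + (p$2)^2 = a^2 * (1 - (p$3)^2 - (p$4)^2)}"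

text \<open>Defining function F(p) = x^2+y^2+a^2 z^2+a^2 w^2 - a^2, with M_a = F^{-1}(0);
  tangent space at p = kernel of dF_p.\<close>
definition Fa :: "real \<Rightarrow> real^4 \<Rightarrow> real" where
  "Fa a p = (p$1)^2 + (p$2)^2 + a^2 * (p$3)^2 + a^2 * (p$4)^2 - a^2"

definition tangent_space :: "real \<Rightarrow> real^4 \<Rightarrow> (real^4) set" where
  "tangent_space a p = {v. frechet_derivative (Fa a) (at p) v = 0}"

text \<open>Unit-free normal direction (gradient of F up to factor 2) and tangential projection.\<close>
definition normal_a :: "real \<Rightarrow> real^4 \<Rightarrow> real^4" where
  "normal_a a p = vector [p$1, p$2, a^2 * p$3, a^2 * p$4]"

definition tang_proj :: "real \<Rightarrow> real^4 \<Rightarrow> real^4 \<Rightarrow> real^4" where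
  "tang_proj a p u = u - ((u \<bullet> normal_a a p) / (normal_a a p \<bullet> normal_a a p)) *\<^sub>R normal_a a p"

fun Ck_on :: "nat \<Rightarrow> (real^4) set \<Rightarrow> (real^4 \<Rightarrow> real^4) \<Rightarrow> bool" where
  "Ck_on 0 S f = continuous_on S f"
| "Ck_on (Suc k) S f = (\<exists>f'. (\<forall>x\<in>S. (f has_derivative f' x) (at x)) \<and>
                                (\<forall>v. Ck_on k S (\<lambda>x. f' x v)))"

definition smooth_on :: "(real^4) set \<Rightarrow> (real^4 \<Rightarrow> real^4) \<Rightarrow> bool" where
  "smooth_on S f = (\<forall>k. Ck_on k S f)"

text \<open>A (smooth) vector field on M_a: given by a smooth map on an open neighbourhood of
  M_a in R^4 which is tangent to M_a at every point of M_a (only its values on M_a matter).\<close>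
definition vector_field :: "real \<Rightarrow> (real^4 \<Rightarrow> real^4) \<Rightarrow> bool" where
  "vector_field a X = ((\<exists>U. open U \<and> Ma a \<subseteq> U \<and> smooth_on U X) \<and>
                        (\<forall>p\<in>Ma a. X p \<in> tangent_space a p))"

text \<open>Levi-Civita connection of the induced metric (Gauss formula): tangential part of the
  ambient directional derivative.\<close>
definition LC_nabla :: "real \<Rightarrow> (real^4 \<Rightarrow> real^4) \<Rightarrow> (real^4 \<Rightarrow> real^4) \<Rightarrow> real^4 \<Rightarrow> real^4" where
  "LC_nabla a V X p = tang_proj a p (frechet_derivative X (at p) (V p))"

definition Killing :: "real \<Rightarrow> (real^4 \<Rightarrow> real^4) \<Rightarrow> bool" where
  "Killing a X = (vector_field a X \<and>
     (\<forall>V W. vector_field a V \<longrightarrow> vector_field a W \<longrightarrow>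
        (\<forall>p\<in>Ma a. LC_nabla a V X p \<bullet> W p = - (LC_nabla a W X p \<bullet> V p))))"

definition d_xi :: "real^4 \<Rightarrow> real^4" where
  "d_xi p = vector [- p$2, p$1, 0, 0]"

definition d_mu :: "real^4 \<Rightarrow> real^4" where
  "d_mu p = vector [0, 0, - p$4, p$3]"

end

theory Submission
  imports Defs
begin

text \<open>In the coordinates
  Psi(\<theta>,\<alpha>,\<beta>) = (a cos \<theta> cos \<alpha>, a cos \<theta> sin \<alpha>, sin \<theta> cos \<beta>, sin \<theta> sin \<beta>)
  the Killing equation becomes a first-order system for the components of X.
  Its (\<theta>,\<theta>)-component together with tangency forces
  X \<bullet> \<partial>Psi/\<partial>\<theta> = \<rho>(\<theta>) f(\<alpha>,\<beta>), where \<rho> = sqrt(cos(\<theta>)^2 + a^2 sin(\<theta>)^2) is the length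
  of \<partial>Psi/\<partial>\<theta>. Integrating the (\<theta>,\<alpha>)-component in \<theta> and differentiating the result
  in \<alpha> by means of the (\<alpha>,\<alpha>)-component leaves c I(\<theta>) + a^2 tan(\<theta>) / \<rho>(\<theta>) f = 0, with I the
  primitive of \<rho> / cos^2 vanishing at 0. For a \<noteq> 1 these two functions of \<theta> are linearly
  independent, so f = 0. The remaining components then satisfy linear ODEs in \<theta> whose
  solutions are exactly the components of c1 d_xi + c2 d_mu.

  Conversely, a field that agrees on M_a with the skew-symmetric linear map c1 d_xi + c2 d_mu
  has that map as its derivative along M_a, which is the Killing equation.\<close>

lemma vector_4 [simp]:
  "(vector [x,y,z,w] :: ('a::zero)^4)$1 = x"
  "(vector [x,y,z,w] :: ('a::zero)^4)$2 = y"
  "(vector [x,y,z,w] :: ('a::zero)^4)$3 = z"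
  "(vector [x,y,z,w] :: ('a::zero)^4)$4 = w"
  unfolding vector_def by simp_all

lemma inner_vec4: "(x::real^4) \<bullet> y = x$1*y$1 + x$2*y$2 + x$3*y$3 + x$4*y$4"
  by (simp add: inner_vec_def sum_4)

lemma vec4_eq_iff: "(x::real^4) = y \<longleftrightarrow> x$1=y$1 \<and> x$2=y$2 \<and> x$3=y$3 \<and> x$4=y$4"
  by (simp add: vec_eq_iff forall_4)

lemma has_derivative_vec_nth [derivative_intros]:
  "(f has_derivative f') F \<Longrightarrow> ((\<lambda>x. f x $ i) has_derivative (\<lambda>h. f' h $ i)) F"
  by (rule bounded_linear.has_derivative[OF bounded_linear_vec_nth])

lemma has_vector_derivative_vector4:
  assumes "(f1 has_real_derivative d1) F" "(f2 has_real_derivative d2) F"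
    "(f3 has_real_derivative d3) F" "(f4 has_real_derivative d4) F"
    and "d = vector [d1, d2, d3, d4]"
  shows "((\<lambda>t. vector [f1 t, f2 t, f3 t, f4 t] :: real^4) has_vector_derivative d) F"
proof -
  have axis: "(vector [x1, x2, x3, x4] :: real^4) =
      x1 *\<^sub>R axis 1 1 + x2 *\<^sub>R axis 2 1 + x3 *\<^sub>R axis 3 1 + x4 *\<^sub>R axis 4 1" for x1 x2 x3 x4
    by (simp add: vec4_eq_iff axis_def)
  show ?thesis
    unfolding axis \<open>d = _\<close>
    by (intro has_vector_derivative_add bounded_linear.has_vector_derivative[OF bounded_linear_scaleR_left]
        assms(1-4)[unfolded has_real_derivative_iff_has_vector_derivative])
qed

lemma has_real_derivative_inner_comp:
  assumes X: "(X has_derivative DX) (at (g t))" and g: "(g has_vector_derivative g') (at t)"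
    and e: "(e has_vector_derivative e') (at t)"
  shows "((\<lambda>s. X (g s) \<bullet> e s) has_real_derivative (DX g' \<bullet> e t + X (g t) \<bullet> e')) (at t)"
proof -
  have "((\<lambda>s. X (g s)) has_derivative (\<lambda>h. DX (h *\<^sub>R g'))) (at t)"
    using has_derivative_compose[OF g[unfolded has_vector_derivative_def] X] .
  then have "((\<lambda>s. X (g s)) has_vector_derivative DX g') (at t)"
    unfolding has_vector_derivative_def using linear_cmul[OF has_derivative_linear[OF X]] by simp
  from bounded_bilinear.has_vector_derivative[OF bounded_bilinear_inner this e] show ?thesis
    by (simp add: has_real_derivative_iff_has_vector_derivative inner_commute add.commute)
qed

subsection \<open>Tangent vectors and vector fields on M_a\<close>

lemma Fa_has_derivative: "(Fa a has_derivative (\<lambda>v. 2 * (normal_a a p \<bullet> v))) (at p)"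
  unfolding Fa_def[abs_def] normal_a_def
  by (auto intro!: derivative_eq_intros simp: inner_vec4 algebra_simps)

lemma tangent_space_iff: "v \<in> tangent_space a p \<longleftrightarrow> normal_a a p \<bullet> v = 0"
  unfolding tangent_space_def frechet_derivative_at[OF Fa_has_derivative, symmetric] by simp

lemma inner_tang_proj: "normal_a a p \<bullet> w = 0 \<Longrightarrow> tang_proj a p u \<bullet> w = u \<bullet> w"
  unfolding tang_proj_def by (simp add: inner_diff_left)

lemma Ck_on_affine: "linear L \<Longrightarrow> Ck_on k S (\<lambda>x. L x + c)"
proof (induction k arbitrary: L c)
  case 0
  then show ?case
    using linear_conv_bounded_linear[of L] linear_continuous_on[of L S]
    by (auto intro!: continuous_on_add continuous_on_const)
next
  case (Suc k)
  have "((\<lambda>x. L x + c) has_derivative L) (at x)" for x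
    using Suc.prems by (auto intro!: derivative_eq_intros linear_imp_has_derivative)
  moreover have "Ck_on k S (\<lambda>x. (\<lambda>_. 0) x + L v)" for v
    by (rule Suc.IH) (simp add: linear_zero)
  ultimately show ?case by (auto intro!: exI[of _ "\<lambda>x. L"])
qed

lemma smooth_on_linear: "linear L \<Longrightarrow> smooth_on S L"
  unfolding smooth_on_def using Ck_on_affine[of L _ S 0] by simp

lemma vector_field_linear:
  "linear L \<Longrightarrow> (\<And>q. q \<in> Ma a \<Longrightarrow> normal_a a q \<bullet> L q = 0) \<Longrightarrow> vector_field a L"
  unfolding vector_field_def tangent_space_iff by (auto intro!: exI[of _ UNIV] smooth_on_linear)

lemma vector_field_tangent: "vector_field a X \<Longrightarrow> p \<in> Ma a \<Longrightarrow> normal_a a p \<bullet> X p = 0"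
  unfolding vector_field_def tangent_space_iff by blast

lemma vector_field_has_derivative:
  assumes "vector_field a X" "p \<in> Ma a"
  shows "(X has_derivative frechet_derivative X (at p)) (at p)"
proof -
  obtain U where U: "Ma a \<subseteq> U" "Ck_on 1 U X"
    using assms(1) unfolding vector_field_def smooth_on_def by blast
  then obtain X' where "(X has_derivative X') (at p)"
    using assms(2) by (auto simp: One_nat_def)
  then show ?thesis using frechet_derivative_at by metis
qed

lemma Ma_nonzero: "a \<noteq> 0 \<Longrightarrow> p \<in> Ma a \<Longrightarrow> p \<noteq> 0"
  unfolding Ma_def by auto

text \<open>The Killing condition quantifies over vector fields only; every tangent vector is the
  value of a linear field, built so that it is tangent to every level set of Fa.\<close>

lemma tangent_vector_extends:
  assumes a: "a \<noteq> 0" and p: "p \<in> Ma a" and v: "normal_a a p \<bullet> v = 0"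
  shows "\<exists>V. vector_field a V \<and> V p = v"
proof -
  define p' :: "real^4" where "p' = vector [p$1, p$2, p$3 / a^2, p$4 / a^2]"
  define V where "V q = (1 / (p \<bullet> p)) *\<^sub>R ((p \<bullet> q) *\<^sub>R v - (normal_a a v \<bullet> q) *\<^sub>R p')" for q
  have "linear V"
    unfolding V_def by (intro linearI) (simp_all add: inner_add_right algebra_simps)
  moreover have "normal_a a q \<bullet> V q = 0" for q
  proof -
    have "normal_a a q \<bullet> ((p \<bullet> q) *\<^sub>R v - (normal_a a v \<bullet> q) *\<^sub>R p') = 0"
      unfolding normal_a_def p'_def using a by (simp add: inner_vec4 algebra_simps)
    then show ?thesis unfolding V_def by simp
  qed
  moreover have "V p = v"
  proof -
    have "normal_a a v \<bullet> p = 0" using v unfolding normal_a_def by (simp add: inner_vec4 algebra_simps)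
    moreover have "p \<bullet> p \<noteq> 0" using Ma_nonzero[OF a p] by simp
    ultimately show ?thesis unfolding V_def by simp
  qed
  ultimately show ?thesis using vector_field_linear by blast
qed

lemma Killing_derivative_skew:
  assumes a: "a \<noteq> 0" and K: "Killing a X" and p: "p \<in> Ma a"
    and v: "normal_a a p \<bullet> v = 0" and w: "normal_a a p \<bullet> w = 0"
  shows "frechet_derivative X (at p) v \<bullet> w + frechet_derivative X (at p) w \<bullet> v = 0"
proof -
  obtain V where V: "vector_field a V" "V p = v" using tangent_vector_extends[OF a p v] by blast
  obtain W where W: "vector_field a W" "W p = w" using tangent_vector_extends[OF a p w] by blast
  have "LC_nabla a V X p \<bullet> W p = - (LC_nabla a W X p \<bullet> V p)"
    using K V W p unfolding Killing_def by blast
  then show ?thesis unfolding LC_nabla_def using V W v w by (simp add: inner_tang_proj)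
qed

subsection \<open>Rotation fields are Killing\<close>

definition Ma_gauge :: "real \<Rightarrow> real^4 \<Rightarrow> real" where
  "Ma_gauge a q = ((q$1)^2 + (q$2)^2) / a^2 + (q$3)^2 + (q$4)^2"

definition Ma_retract :: "real \<Rightarrow> real^4 \<Rightarrow> real^4" where
  "Ma_retract a q = (1 / sqrt (Ma_gauge a q)) *\<^sub>R q"

lemma Ma_gauge_pos:
  assumes a: "a \<noteq> 0" and q: "q \<noteq> 0"
  shows "Ma_gauge a q > 0"
proof (cases "q$1 \<noteq> 0 \<or> q$2 \<noteq> 0")
  case True
  then have "((q$1)^2 + (q$2)^2) / a^2 > 0"
    using a by (auto intro!: divide_pos_pos simp: add_pos_nonneg add_nonneg_pos)
  then show ?thesis unfolding Ma_gauge_def by (simp add: add_pos_nonneg)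
next
  case False
  then have "q$3 \<noteq> 0 \<or> q$4 \<noteq> 0" using q by (auto simp: vec4_eq_iff)
  then show ?thesis using False unfolding Ma_gauge_def by (auto simp: add_pos_nonneg add_nonneg_pos)
qed

lemma Ma_gauge_Ma: "a \<noteq> 0 \<Longrightarrow> p \<in> Ma a \<Longrightarrow> Ma_gauge a p = 1"
  unfolding Ma_gauge_def Ma_def by (auto simp: field_simps)

lemma Ma_retract_in_Ma:
  assumes a: "a \<noteq> 0" and q: "q \<noteq> 0"
  shows "Ma_retract a q \<in> Ma a"
proof -
  have "(q$1)^2 + (q$2)^2 = a^2 * (Ma_gauge a q - (q$3)^2 - (q$4)^2)"
    unfolding Ma_gauge_def using a by (simp add: field_simps)
  then show ?thesis unfolding Ma_def Ma_retract_def using Ma_gauge_pos[OF a q]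
    by (simp add: power_mult_distrib power_divide field_simps)
qed

lemma Ma_retract_Ma: "a \<noteq> 0 \<Longrightarrow> p \<in> Ma a \<Longrightarrow> Ma_retract a p = p"
  unfolding Ma_retract_def using Ma_gauge_Ma by simp

lemma Ma_retract_has_derivative:
  assumes a: "a \<noteq> 0" and p: "p \<in> Ma a"
  shows "(Ma_retract a has_derivative (\<lambda>v. v - ((normal_a a p \<bullet> v) / a^2) *\<^sub>R p)) (at p)"
proof -
  have gauge: "Ma_gauge a p = 1" using Ma_gauge_Ma[OF a p] .
  have "(Ma_gauge a has_derivative (\<lambda>v. 2 * ((normal_a a p \<bullet> v) / a^2))) (at p)"
    unfolding Ma_gauge_def[abs_def]
    using a by (auto intro!: derivative_eq_intros simp: normal_a_def inner_vec4 field_simps)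
  moreover have "((\<lambda>x. 1 / sqrt x) has_derivative (*) (-1/2)) (at (Ma_gauge a p))"
    unfolding gauge has_field_derivative_def[symmetric]
    by (rule derivative_eq_intros refl | simp)+
  ultimately have "((\<lambda>q. 1 / sqrt (Ma_gauge a q)) has_derivative
      (\<lambda>v. (-1/2) * (2 * ((normal_a a p \<bullet> v) / a^2)))) (at p)"
    by (rule has_derivative_compose)
  from has_derivative_scaleR[OF this has_derivative_ident] show ?thesis
    unfolding Ma_retract_def[abs_def] using gauge by (simp add: algebra_simps)
qed

text \<open>Composing with the retraction onto M_a makes X and Y equal near p, so their
  derivatives agree on the tangent vectors, which the retraction fixes.\<close>

lemma frechet_derivative_eq_on_tangent:
  assumes a: "a \<noteq> 0" and X: "vector_field a X" and XY: "\<And>q. q \<in> Ma a \<Longrightarrow> X q = Y q"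
    and Y: "linear Y" and p: "p \<in> Ma a" and v: "normal_a a p \<bullet> v = 0"
  shows "frechet_derivative X (at p) v = Y v"
proof -
  let ?DX = "frechet_derivative X (at p)"
  let ?DR = "\<lambda>v. v - ((normal_a a p \<bullet> v) / a^2) *\<^sub>R p"
  have "(X has_derivative ?DX) (at (Ma_retract a p))"
    using vector_field_has_derivative[OF X p] Ma_retract_Ma[OF a p] by simp
  from has_derivative_compose[OF Ma_retract_has_derivative[OF a p] this]
  have "((\<lambda>q. Y (Ma_retract a q)) has_derivative (\<lambda>h. ?DX (?DR h))) (at p)"
  proof (rule has_derivative_transform_within_open[where s="- {0}"])
    show "p \<in> - {0}" using Ma_nonzero[OF a p] by auto
    show "\<And>q. q \<in> - {0} \<Longrightarrow> X (Ma_retract a q) = Y (Ma_retract a q)"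
      using XY Ma_retract_in_Ma[OF a] by auto
  qed auto
  moreover have "((\<lambda>q. Y (Ma_retract a q)) has_derivative (\<lambda>h. Y (?DR h))) (at p)"
    using has_derivative_compose[OF Ma_retract_has_derivative[OF a p] linear_imp_has_derivative[OF Y]] .
  ultimately have "(\<lambda>h. ?DX (?DR h)) = (\<lambda>h. Y (?DR h))"
    by (rule has_derivative_unique)
  from fun_cong[OF this, of v] show ?thesis using v by simp
qed

definition rot_field :: "real \<Rightarrow> real \<Rightarrow> real^4 \<Rightarrow> real^4" where
  "rot_field c1 c2 q = c1 *\<^sub>R d_xi q + c2 *\<^sub>R d_mu q"

lemma linear_rot_field: "linear (rot_field c1 c2)"
  unfolding rot_field_def d_xi_def d_mu_def
  by (intro linearI) (simp_all add: vec4_eq_iff algebra_simps)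

lemma inner_rot_field_skew: "rot_field c1 c2 v \<bullet> w = - (rot_field c1 c2 w \<bullet> v)"
  unfolding rot_field_def d_xi_def d_mu_def by (simp add: inner_vec4 algebra_simps)

lemma vector_field_rot_field: "vector_field a (rot_field c1 c2)"
  by (rule vector_field_linear[OF linear_rot_field])
    (simp add: rot_field_def d_xi_def d_mu_def normal_a_def inner_vec4 algebra_simps)

lemma Killing_if_eq_rot_field:
  assumes a: "a \<noteq> 0" and X: "vector_field a X" and XR: "\<And>q. q \<in> Ma a \<Longrightarrow> X q = rot_field c1 c2 q"
  shows "Killing a X"
  unfolding Killing_def
proof (intro conjI allI impI ballI)
  fix V W p assume V: "vector_field a V" and W: "vector_field a W" and p: "p \<in> Ma a"
  have tV: "normal_a a p \<bullet> V p = 0" and tW: "normal_a a p \<bullet> W p = 0"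
    using vector_field_tangent[OF V p] vector_field_tangent[OF W p] .
  have "frechet_derivative X (at p) (V p) = rot_field c1 c2 (V p)"
    "frechet_derivative X (at p) (W p) = rot_field c1 c2 (W p)"
    using frechet_derivative_eq_on_tangent[OF a X XR linear_rot_field p] tV tW by blast+
  then show "LC_nabla a V X p \<bullet> W p = - (LC_nabla a W X p \<bullet> V p)"
    unfolding LC_nabla_def inner_tang_proj[OF tV] inner_tang_proj[OF tW]
    by (simp add: inner_rot_field_skew[of c1 c2 "V p"])
qed (fact X)

lemma rot_field_vanishing:
  assumes a: "a \<noteq> 0" and h: "\<forall>p\<in>Ma a. rot_field c1 c2 p = 0"
  shows "c1 = 0 \<and> c2 = 0"
proof -
  have "vector [a, 0, 0, 0] \<in> Ma a" "vector [0, 0, 1, 0] \<in> Ma a" unfolding Ma_def by simp_all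
  with h have "rot_field c1 c2 (vector [a, 0, 0, 0]) $ 2 = 0" "rot_field c1 c2 (vector [0, 0, 1, 0]) $ 4 = 0"
    by simp_all
  then have "c1 * a = 0" "c2 = 0"
    unfolding rot_field_def d_xi_def d_mu_def by simp_all
  then show ?thesis using a by simp
qed

subsection \<open>Coordinates on M_a\<close>

definition Psi :: "real \<Rightarrow> real \<Rightarrow> real \<Rightarrow> real \<Rightarrow> real^4" where
  "Psi a th al be = vector [a * cos th * cos al, a * cos th * sin al, sin th * cos be, sin th * sin be]"

definition Psi_th :: "real \<Rightarrow> real \<Rightarrow> real \<Rightarrow> real \<Rightarrow> real^4" where
  "Psi_th a th al be = vector [- a * sin th * cos al, - a * sin th * sin al, cos th * cos be, cos th * sin be]"

definition Psi_al :: "real \<Rightarrow> real \<Rightarrow> real \<Rightarrow> real^4" where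
  "Psi_al a th al = vector [- a * cos th * sin al, a * cos th * cos al, 0, 0]"

definition Psi_be :: "real \<Rightarrow> real \<Rightarrow> real^4" where
  "Psi_be th be = vector [0, 0, - sin th * sin be, sin th * cos be]"

definition E1 :: "real \<Rightarrow> real^4" where "E1 al = vector [cos al, sin al, 0, 0]"
definition E2 :: "real \<Rightarrow> real^4" where "E2 be = vector [0, 0, cos be, sin be]"
definition E3 :: "real \<Rightarrow> real^4" where "E3 al = vector [- sin al, cos al, 0, 0]"
definition E4 :: "real \<Rightarrow> real^4" where "E4 be = vector [0, 0, - sin be, cos be]"

lemmas coordinate_defs = Psi_def Psi_th_def Psi_al_def Psi_be_def E1_def E2_def E3_def E4_def

lemma Psi_in_Ma: "Psi a th al be \<in> Ma a"
proof -
  have "(a * cos th * cos al)^2 + (a * cos th * sin al)^2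
      = a^2 * (1 - (sin th * cos be)^2 - (sin th * sin be)^2)"
    using sin_cos_squared_add[of al] sin_cos_squared_add[of be] sin_cos_squared_add[of th]
    by algebra
  then show ?thesis unfolding Ma_def Psi_def by simp
qed

lemma sum_squares_polar:
  fixes x y R :: real
  assumes "R \<ge> 0" "x^2 + y^2 = R^2"
  shows "\<exists>t. x = R * cos t \<and> y = R * sin t"
proof (cases "R = 0")
  case True
  then show ?thesis using assms by simp
next
  case False
  then have "(x/R)^2 + (y/R)^2 = 1" using assms by (simp add: power_divide field_simps)
  then obtain t where "x/R = cos t" "y/R = sin t" using sincos_total_2pi_le by blast
  then show ?thesis using False by (auto simp: field_simps)
qed

lemma Psi_onto_Ma:
  assumes a: "a > 0" and p: "p \<in> Ma a"
  shows "\<exists>th al be. 0 \<le> th \<and> th \<le> pi/2 \<and> p = Psi a th al be"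
proof -
  define s where "s = sqrt ((p$3)^2 + (p$4)^2)"
  have s0: "0 \<le> s" and s34: "(p$3)^2 + (p$4)^2 = s^2" unfolding s_def by simp_all
  have p12: "(p$1)^2 + (p$2)^2 = a^2 * (1 - s^2)" using p s34 unfolding Ma_def by simp
  then have "0 \<le> a^2 * (1 - s^2)" by (metis add_nonneg_nonneg zero_le_power2)
  then have "s^2 \<le> 1" using a by (simp add: zero_le_mult_iff)
  then have s1: "s \<le> 1" using s0 by (simp add: power_le_one_iff)
  define th where "th = arcsin s"
  have th: "0 \<le> th" "th \<le> pi/2" "sin th = s" "cos th = sqrt (1 - s^2)"
    unfolding th_def using s0 s1 arcsin_nonneg[of s] arcsin_ubound[of s] cos_arcsin[of s] by auto
  obtain be where be: "p$3 = s * cos be" "p$4 = s * sin be"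
    using sum_squares_polar[OF s0 s34] by blast
  have "(p$1)^2 + (p$2)^2 = (a * cos th)^2"
    using p12 th(4) \<open>s^2 \<le> 1\<close> by (simp add: power_mult_distrib)
  moreover have "0 \<le> a * cos th" using a th(1,2) by (simp add: cos_ge_zero)
  ultimately obtain al where al: "p$1 = a * cos th * cos al" "p$2 = a * cos th * sin al"
    using sum_squares_polar by blast
  have "p = Psi a th al be" unfolding Psi_def using al be th by (simp add: vec4_eq_iff)
  then show ?thesis using th by blast
qed

lemma Psi_d_th: "((\<lambda>t. Psi a t al be) has_vector_derivative Psi_th a th al be) (at th)"
  and Psi_d_al: "((\<lambda>t. Psi a th t be) has_vector_derivative Psi_al a th al) (at al)"
  and Psi_d_be: "((\<lambda>t. Psi a th al t) has_vector_derivative Psi_be th be) (at be)"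
  and Psi_th_d_th: "((\<lambda>t. Psi_th a t al be) has_vector_derivative - Psi a th al be) (at th)"
  and Psi_th_d_al: "((\<lambda>t. Psi_th a th t be) has_vector_derivative (- (a * sin th)) *\<^sub>R E3 al) (at al)"
  and Psi_th_d_be: "((\<lambda>t. Psi_th a th al t) has_vector_derivative cos th *\<^sub>R E4 be) (at be)"
  and Psi_al_d_th: "((\<lambda>t. Psi_al a t al) has_vector_derivative (- (a * sin th)) *\<^sub>R E3 al) (at th)"
  and Psi_al_d_al: "((\<lambda>t. Psi_al a th t) has_vector_derivative (- (a * cos th)) *\<^sub>R E1 al) (at al)"
  and Psi_be_d_th: "((\<lambda>t. Psi_be t be) has_vector_derivative cos th *\<^sub>R E4 be) (at th)"
  and Psi_be_d_be: "((\<lambda>t. Psi_be th t) has_vector_derivative (- sin th) *\<^sub>R E2 be) (at be)"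
  unfolding coordinate_defs
  by (rule has_vector_derivative_vector4, (rule derivative_eq_intros refl)+, simp add: vec4_eq_iff)+

lemma Psi_th_frame: "Psi_th a th al be = (- (a * sin th)) *\<^sub>R E1 al + cos th *\<^sub>R E2 be"
  and Psi_al_frame: "Psi_al a th al = (a * cos th) *\<^sub>R E3 al"
  and Psi_be_frame: "Psi_be th be = sin th *\<^sub>R E4 be"
  and Psi_frame: "Psi a th al be = (a * cos th) *\<^sub>R E1 al + sin th *\<^sub>R E2 be"
  and normal_Psi_frame: "normal_a a (Psi a th al be) = (a * cos th) *\<^sub>R E1 al + (a^2 * sin th) *\<^sub>R E2 be"
  unfolding coordinate_defs normal_a_def by (simp_all add: vec4_eq_iff power2_eq_square)

lemma inner_Psi: "y \<bullet> Psi a th al be = a * cos th * (y \<bullet> E1 al) + sin th * (y \<bullet> E2 be)"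
  unfolding Psi_frame by (simp add: inner_add_right)

lemma frame_expansion:
  "x = (x \<bullet> E1 al) *\<^sub>R E1 al + (x \<bullet> E2 be) *\<^sub>R E2 be + (x \<bullet> E3 al) *\<^sub>R E3 al + (x \<bullet> E4 be) *\<^sub>R E4 be"
  unfolding coordinate_defs
  by (simp add: vec4_eq_iff inner_vec4,
      use sin_cos_squared_add[of al] sin_cos_squared_add[of be] in algebra)

lemma frame_orthonormal:
  "E1 al \<bullet> E2 be = 0" "E1 al \<bullet> E3 al = 0" "E1 al \<bullet> E4 be = 0"
  "E2 be \<bullet> E3 al = 0" "E2 be \<bullet> E4 be = 0" "E3 al \<bullet> E4 be = 0"
  "E1 al \<bullet> E1 al = 1" "E2 be \<bullet> E2 be = 1"
  unfolding coordinate_defs by (simp_all add: inner_vec4 algebra_simps)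

lemma Psi_partials_tangent:
  "normal_a a (Psi a th al be) \<bullet> Psi_th a th al be = 0"
  "normal_a a (Psi a th al be) \<bullet> Psi_al a th al = 0"
  "normal_a a (Psi a th al be) \<bullet> Psi_be th be = 0"
  unfolding normal_Psi_frame Psi_th_frame Psi_al_frame Psi_be_frame
  by (simp_all add: inner_add_left inner_add_right frame_orthonormal inner_commute[of "E3 al"]
      inner_commute[of "E4 be"] inner_commute[of "E2 be" "E1 al"] algebra_simps power2_eq_square)

subsection \<open>Functions of \<theta>\<close>

definition rho :: "real \<Rightarrow> real \<Rightarrow> real" where
  "rho a t = sqrt ((cos t)^2 + a^2 * (sin t)^2)"

lemma rho_squared: "(rho a t)^2 = (cos t)^2 + a^2 * (sin t)^2"
  unfolding rho_def by (simp add: add_nonneg_nonneg)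

lemma rho_pos:
  assumes "a \<noteq> 0" shows "rho a t > 0"
proof -
  have "(cos t)^2 + a^2 * (sin t)^2 > 0"
  proof (cases "cos t = 0")
    case True
    then have "(sin t)^2 = 1" using sin_cos_squared_add[of t] by simp
    then show ?thesis using True assms by simp
  qed (simp add: add_pos_nonneg)
  then show ?thesis unfolding rho_def by simp
qed

lemma rho_0 [simp]: "rho a 0 = 1"
  unfolding rho_def by simp

lemma rho_has_real_derivative:
  assumes a: "a \<noteq> 0"
  shows "(rho a has_real_derivative ((a^2 - 1) * sin t * cos t / rho a t)) (at t)"
proof -
  have "((\<lambda>t. (cos t)^2 + a^2 * (sin t)^2) has_real_derivative
      2 * cos t * (- sin t) + a^2 * (2 * sin t * cos t)) (at t)"
    by (rule derivative_eq_intros refl | simp)+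
  moreover have "0 < (rho a t)^2" using rho_pos[OF a, of t] by simp
  then have "0 < (cos t)^2 + a^2 * (sin t)^2" by (simp add: rho_squared)
  ultimately show ?thesis unfolding rho_def[abs_def]
    by (auto intro!: derivative_eq_intros simp: field_simps)
qed

lemma cos_gt_zero_unit_interval:
  fixes t :: real
  assumes "t \<in> {-1..1}" shows "cos t > 0"
  by (rule cos_gt_zero_pi) (use assms pi_gt3 in auto)

text \<open>The primitive of \<rho> / cos^2 vanishing at 0; {-1..1} is a compact interval on which cos > 0,
  and the base point -1 avoids integrals over reversed intervals.\<close>

definition rho_sec2 :: "real \<Rightarrow> real \<Rightarrow> real" where
  "rho_sec2 a t = rho a t / (cos t)^2"

definition rho_sec2_prim :: "real \<Rightarrow> real \<Rightarrow> real" where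
  "rho_sec2_prim a t = integral {-1..t} (rho_sec2 a) - integral {-1..0} (rho_sec2 a)"

lemma rho_sec2_prim_0 [simp]: "rho_sec2_prim a 0 = 0"
  unfolding rho_sec2_prim_def by simp

lemma rho_sec2_pos:
  assumes "a \<noteq> 0" "t \<in> {-1..1}" shows "rho_sec2 a t > 0"
  unfolding rho_sec2_def using rho_pos[OF assms(1)] cos_gt_zero_unit_interval[OF assms(2)] by simp

lemma rho_sec2_prim_has_derivative_within:
  assumes "t \<in> {-1..1}"
  shows "(rho_sec2_prim a has_real_derivative rho_sec2 a t) (at t within {-1..1})"
proof -
  have "continuous_on {-1..1} (rho_sec2 a)"
    unfolding rho_sec2_def rho_def
    by (intro continuous_intros) (auto dest: cos_gt_zero_unit_interval)
  from integral_has_real_derivative[OF this] show ?thesis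
    unfolding rho_sec2_prim_def[abs_def] using assms by (auto intro!: derivative_eq_intros)
qed

lemma rho_sec2_prim_has_derivative:
  "t \<in> {-1<..<1} \<Longrightarrow> (rho_sec2_prim a has_real_derivative rho_sec2 a t) (at t)"
  using rho_sec2_prim_has_derivative_within[of t a] at_within_interior[of t "{-1..1::real}"] by auto

lemma rho_sec2_prim_pos:
  assumes a: "a \<noteq> 0" and t: "0 < t" "t < 1"
  shows "rho_sec2_prim a t > 0"
proof -
  obtain z where z: "0 < z" "z < t" "rho_sec2_prim a t - rho_sec2_prim a 0 = (t - 0) * rho_sec2 a z"
    using MVT2[of 0 t "rho_sec2_prim a" "rho_sec2 a"] t rho_sec2_prim_has_derivative by force
  then show ?thesis using rho_sec2_pos[OF a, of z] t by simp
qed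

definition tan_rho :: "real \<Rightarrow> real \<Rightarrow> real" where
  "tan_rho a t = a^2 * sin t / (cos t * rho a t)"

lemma tan_rho_has_derivative:
  assumes a: "a \<noteq> 0" and c: "cos t \<noteq> 0"
  shows "(tan_rho a has_real_derivative
    a^2 * ((rho a t)^2 - (a^2 - 1) * (sin t)^2 * (cos t)^2) / ((cos t)^2 * (rho a t)^3)) (at t)"
proof -
  have r: "rho a t > 0" using rho_pos[OF a] .
  have d: "(tan_rho a has_real_derivative
     ((a^2 * cos t) * (cos t * rho a t) - a^2 * sin t * ((- sin t) * rho a t
       + cos t * ((a^2 - 1) * sin t * cos t / rho a t))) / ((cos t * rho a t) * (cos t * rho a t))) (at t)"
    unfolding tan_rho_def[abs_def]
    by (rule derivative_eq_intros refl rho_has_real_derivative[OF a] | use r c in simp)+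
  have num: "(a^2 * c) * (c * r) - a^2 * s * ((- s) * r + c * ((a^2 - 1) * s * c / r))
      = a^2 * (r^2 - (a^2 - 1) * s^2 * c^2) / r" if "s^2 + c^2 = 1" "r > 0" for s c r :: real
  proof -
    have "(a^2 * c) * (c * r) - a^2 * s * ((- s) * r + c * ((a^2 - 1) * s * c / r))
        = a^2 * (r^2 * (s^2 + c^2) - (a^2 - 1) * s^2 * c^2) / r"
      using that(2) by (simp add: field_simps power2_eq_square)
    then show ?thesis using that(1) by simp
  qed
  show ?thesis
    by (rule DERIV_cong[OF d], unfold num[OF sin_cos_squared_add r])
      (use r c in \<open>simp add: field_simps power2_eq_square power3_eq_cube\<close>)
qed

lemma rho_quartic_ne:
  assumes a: "a > 0" "a \<noteq> 1" and s: "sin t \<noteq> 0" and c: "cos t \<noteq> 0"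
  shows "(rho a t)^2 - (a^2 - 1) * (sin t)^2 * (cos t)^2 \<noteq> (rho a t)^4"
proof -
  define b where "b = a^2 - 1"
  define u where "u = (sin t)^2"
  have b: "b \<noteq> 0" "b > -1" unfolding b_def using a by (auto simp: power2_eq_1_iff)
  have u: "0 < u" "u < 1"
  proof -
    show "0 < u" unfolding u_def using s by simp
    have "0 < (cos t)^2" using c by simp
    then show "u < 1" unfolding u_def using sin_cos_squared_add[of t] by linarith
  qed
  have rho2: "(rho a t)^2 = 1 + b * u" and c2: "(cos t)^2 = 1 - u"
    unfolding rho_squared b_def u_def using sin_cos_squared_add[of t] by (simp_all add: algebra_simps)
  have "(1 - b) * u < 2"
  proof (cases "b \<ge> 1")
    case True
    then have "(1 - b) * u \<le> 0" using u by (intro mult_nonpos_nonneg) auto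
    then show ?thesis by simp
  next
    case False then have "(1 - b) * u < (1 - b) * 1" using u b by (intro mult_strict_left_mono) auto
    then show ?thesis using b by simp
  qed
  then have "b * u * ((1 - b) * u - 2) \<noteq> 0" using b u by simp
  moreover have "(rho a t)^4 = ((rho a t)^2)^2" by simp
  ultimately show ?thesis unfolding b_def[symmetric] u_def[symmetric] rho2 c2
    by (simp add: algebra_simps power2_eq_square)
qed

text \<open>For a \<noteq> 1 the primitive of \<rho> / cos^2 and a^2 tan / \<rho> are linearly independent near 0:
  differentiating a relation between them at 0 and at 1/2 contradicts rho_quartic_ne.\<close>

lemma rho_sec2_prim_tan_rho_independent:
  assumes a: "a > 0" "a \<noteq> 1" and rel: "\<And>t. t \<in> {-1<..<1} \<Longrightarrow> c * rho_sec2_prim a t + tan_rho a t * f = 0"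
  shows "f = 0"
proof -
  have a0: "a \<noteq> 0" using a by simp
  have deriv_rel: "c * rho_sec2 a t +
      a^2 * ((rho a t)^2 - (a^2 - 1) * (sin t)^2 * (cos t)^2) / ((cos t)^2 * (rho a t)^3) * f = 0"
    if t: "t \<in> {-1<..<1}" for t
  proof -
    have "cos t \<noteq> 0" using cos_gt_zero_unit_interval[of t] t by simp
    then have "((\<lambda>t. c * rho_sec2_prim a t + tan_rho a t * f) has_real_derivative
       c * rho_sec2 a t + a^2 * ((rho a t)^2 - (a^2 - 1) * (sin t)^2 * (cos t)^2) / ((cos t)^2 * (rho a t)^3) * f) (at t)"
      by (intro DERIV_add DERIV_cmult DERIV_cmult_right rho_sec2_prim_has_derivative[OF t]
          tan_rho_has_derivative[OF a0])
    moreover have "((\<lambda>t. c * rho_sec2_prim a t + tan_rho a t * f) has_real_derivative 0) (at t)"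
      by (rule has_field_derivative_transform_within_open[OF DERIV_const _ t]) (use rel in auto)
    ultimately show ?thesis by (rule DERIV_unique)
  qed
  have c: "c = - (a^2 * f)" using deriv_rel[of 0] by (simp add: rho_sec2_def)
  define s r co where "s = sin (1/2::real)" and "r = rho a (1/2)" and "co = cos (1/2::real)"
  have r: "r > 0" unfolding r_def using rho_pos[OF a0] .
  have co: "co > 0" unfolding co_def using cos_gt_zero_unit_interval[of "1/2::real"] by simp
  have s: "s \<noteq> 0" unfolding s_def using pi_gt3 by (intro sin_gt_zero[THEN less_imp_neq, symmetric]) auto
  have "c * (r / co^2) + a^2 * (r^2 - (a^2 - 1) * s^2 * co^2) / (co^2 * r^3) * f = 0"
    using deriv_rel[of "1/2"] unfolding rho_sec2_def s_def r_def co_def by simp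
  moreover have "c * (r / co^2) + a^2 * (r^2 - (a^2 - 1) * s^2 * co^2) / (co^2 * r^3) * f
      = (c * r^4 + a^2 * (r^2 - (a^2 - 1) * s^2 * co^2) * f) / (co^2 * r^3)"
    using r co by (simp add: field_simps eval_nat_numeral)
  ultimately have "c * r^4 + a^2 * (r^2 - (a^2 - 1) * s^2 * co^2) * f = 0"
    using r co by simp
  then have "(a^2 * f) * (r^2 - (a^2 - 1) * s^2 * co^2 - r^4) = 0"
    unfolding c by (simp add: algebra_simps)
  moreover have "r^2 - (a^2 - 1) * s^2 * co^2 - r^4 \<noteq> 0"
    using rho_quartic_ne[OF a s[unfolded s_def]] co unfolding r_def s_def co_def by simp
  ultimately show ?thesis using a0 by simp
qed

lemma cos_ode_solution:
  fixes g g' :: "real \<Rightarrow> real"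
  assumes g': "\<And>t. (g has_real_derivative g' t) (at t)"
    and ode: "\<And>t. cos t * g' t = - sin t * g t"
    and t: "0 \<le> t" "t \<le> pi/2"
  shows "g t = cos t * g 0"
proof (cases "t = pi/2")
  case True
  show ?thesis unfolding True using ode[of "pi/2"] by simp
next
  case False
  let ?I = "{-(pi/2)<..<pi/2}"
  have "\<exists>k. \<forall>x\<in>?I. g x / cos x = k"
  proof (rule has_field_derivative_zero_constant)
    fix x assume "x \<in> ?I"
    then have "cos x > 0" by (intro cos_gt_zero_pi) auto
    then have "((\<lambda>t. g t / cos t) has_real_derivative (g' x * cos x - g x * (- sin x)) / (cos x * cos x)) (at x)"
      by (intro DERIV_divide g') (auto intro!: derivative_eq_intros)
    then show "((\<lambda>t. g t / cos t) has_real_derivative 0) (at x within ?I)"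
      using ode[of x] by (simp add: algebra_simps has_field_derivative_at_within)
  qed simp
  moreover have "t \<in> ?I" "(0::real) \<in> ?I" using t False by auto
  ultimately have "g t / cos t = g 0 / cos 0" by metis
  moreover have "cos t > 0" using \<open>t \<in> ?I\<close> by (intro cos_gt_zero_pi) auto
  ultimately show ?thesis by (simp add: field_simps)
qed

lemma sin_ode_solution:
  fixes g g' :: "real \<Rightarrow> real"
  assumes g': "\<And>t. (g has_real_derivative g' t) (at t)"
    and ode: "\<And>t. sin t * g' t = cos t * g t"
    and t: "0 \<le> t" "t \<le> pi/2"
  shows "g t = sin t * g (pi/2)"
proof (cases "t = 0")
  case True
  show ?thesis unfolding True using ode[of 0] by simp
next
  case False
  let ?I = "{0<..<pi}"
  have "\<exists>k. \<forall>x\<in>?I. g x / sin x = k"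
  proof (rule has_field_derivative_zero_constant)
    fix x assume "x \<in> ?I"
    then have "sin x > 0" by (intro sin_gt_zero) auto
    then have "((\<lambda>t. g t / sin t) has_real_derivative (g' x * sin x - g x * cos x) / (sin x * sin x)) (at x)"
      by (intro DERIV_divide g') (auto intro!: derivative_eq_intros)
    then show "((\<lambda>t. g t / sin t) has_real_derivative 0) (at x within ?I)"
      using ode[of x] by (simp add: algebra_simps has_field_derivative_at_within)
  qed simp
  moreover have "t \<in> ?I" "pi/2 \<in> ?I" using t False pi_gt_zero by auto
  ultimately have "g t / sin t = g (pi/2) / sin (pi/2)" by metis
  moreover have "sin t > 0" using \<open>t \<in> ?I\<close> by (intro sin_gt_zero) auto
  ultimately show ?thesis by (simp add: field_simps)
qed

subsection \<open>Killing fields in coordinates\<close>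

context
  fixes a :: real and X :: "real^4 \<Rightarrow> real^4"
  assumes a_pos: "0 < a" and Killing_X: "Killing a X"
begin

definition Xth :: "real \<Rightarrow> real \<Rightarrow> real \<Rightarrow> real" where
  "Xth th al be = X (Psi a th al be) \<bullet> Psi_th a th al be"

definition Xal :: "real \<Rightarrow> real \<Rightarrow> real \<Rightarrow> real" where
  "Xal th al be = X (Psi a th al be) \<bullet> Psi_al a th al"

definition Xbe :: "real \<Rightarrow> real \<Rightarrow> real \<Rightarrow> real" where
  "Xbe th al be = X (Psi a th al be) \<bullet> Psi_be th be"

definition XE1 :: "real \<Rightarrow> real \<Rightarrow> real \<Rightarrow> real" where
  "XE1 th al be = X (Psi a th al be) \<bullet> E1 al"

definition XE2 :: "real \<Rightarrow> real \<Rightarrow> real \<Rightarrow> real" where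
  "XE2 th al be = X (Psi a th al be) \<bullet> E2 be"

definition XE3 :: "real \<Rightarrow> real \<Rightarrow> real \<Rightarrow> real" where
  "XE3 th al be = X (Psi a th al be) \<bullet> E3 al"

definition XE4 :: "real \<Rightarrow> real \<Rightarrow> real \<Rightarrow> real" where
  "XE4 th al be = X (Psi a th al be) \<bullet> E4 be"

lemma a_nonzero: "a \<noteq> 0"
  using a_pos by simp

lemma vector_field_X: "vector_field a X"
  using Killing_X unfolding Killing_def by blast

lemma X_has_derivative_Psi:
  "(X has_derivative frechet_derivative X (at (Psi a th al be))) (at (Psi a th al be))"
  using vector_field_has_derivative[OF vector_field_X Psi_in_Ma] .

lemma Killing_X_partials:
  assumes "v \<in> {Psi_th a th al be, Psi_al a th al, Psi_be th be}"
    and "w \<in> {Psi_th a th al be, Psi_al a th al, Psi_be th be}"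
  shows "frechet_derivative X (at (Psi a th al be)) v \<bullet> w
    + frechet_derivative X (at (Psi a th al be)) w \<bullet> v = 0"
  using assms Killing_derivative_skew[OF a_nonzero Killing_X Psi_in_Ma] Psi_partials_tangent by auto

lemma Xth_frame: "Xth th al be = - (a * sin th) * XE1 th al be + cos th * XE2 th al be"
  and Xal_frame: "Xal th al be = a * cos th * XE3 th al be"
  and Xbe_frame: "Xbe th al be = sin th * XE4 th al be"
  unfolding Xth_def Xal_def Xbe_def XE1_def XE2_def XE3_def XE4_def
    Psi_th_frame Psi_al_frame Psi_be_frame
  by (simp_all add: inner_add_right inner_diff_right)

lemma X_tangent_frame: "cos th * XE1 th al be + a * sin th * XE2 th al be = 0"
proof -
  have "normal_a a (Psi a th al be) \<bullet> X (Psi a th al be) = 0"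
    using vector_field_tangent[OF vector_field_X Psi_in_Ma] .
  then have "a * (cos th * XE1 th al be + a * sin th * XE2 th al be) = 0"
    unfolding normal_Psi_frame XE1_def XE2_def
    by (simp add: inner_add_left inner_commute algebra_simps power2_eq_square)
  then show ?thesis using a_nonzero by simp
qed

text \<open>The six components of the Killing equation in the coordinates (\<theta>, \<alpha>, \<beta>): by the chain rule
  along the coordinate lines, each becomes a relation between derivatives of Xth, Xal, Xbe.\<close>

lemma Killing_th_th:
  "((\<lambda>t. Xth t al be) has_real_derivative
    - (a * cos th * XE1 th al be + sin th * XE2 th al be)) (at th)"
proof -
  let ?D = "frechet_derivative X (at (Psi a th al be))"
  have k: "?D (Psi_th a th al be) \<bullet> Psi_th a th al be = 0"
    using Killing_X_partials[of "Psi_th a th al be" th al be "Psi_th a th al be"] by simp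
  show ?thesis unfolding Xth_def
    by (rule DERIV_cong[OF has_real_derivative_inner_comp[OF X_has_derivative_Psi Psi_d_th Psi_th_d_th]])
      (simp add: k inner_Psi XE1_def XE2_def)
qed

lemma Killing_th_al:
  "((\<lambda>t. Xth th t be) has_real_derivative deriv (\<lambda>t. Xth th t be) al) (at al)"
  "((\<lambda>t. Xal t al be) has_real_derivative
    - 2 * a * sin th * XE3 th al be - deriv (\<lambda>t. Xth th t be) al) (at th)"
proof -
  let ?D = "frechet_derivative X (at (Psi a th al be))"
  have skew: "?D (Psi_th a th al be) \<bullet> Psi_al a th al = - (?D (Psi_al a th al) \<bullet> Psi_th a th al be)"
    using Killing_X_partials[of "Psi_th a th al be" th al be "Psi_al a th al"] by simp
  have d_al: "((\<lambda>t. Xth th t be) has_real_derivative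
      ?D (Psi_al a th al) \<bullet> Psi_th a th al be + X (Psi a th al be) \<bullet> (- (a * sin th)) *\<^sub>R E3 al) (at al)"
    unfolding Xth_def by (rule has_real_derivative_inner_comp[OF X_has_derivative_Psi Psi_d_al Psi_th_d_al])
  then show "((\<lambda>t. Xth th t be) has_real_derivative deriv (\<lambda>t. Xth th t be) al) (at al)"
    using DERIV_imp_deriv by metis
  have "((\<lambda>t. Xal t al be) has_real_derivative
      ?D (Psi_th a th al be) \<bullet> Psi_al a th al + X (Psi a th al be) \<bullet> (- (a * sin th)) *\<^sub>R E3 al) (at th)"
    unfolding Xal_def by (rule has_real_derivative_inner_comp[OF X_has_derivative_Psi Psi_d_th Psi_al_d_th])
  then show "((\<lambda>t. Xal t al be) has_real_derivative
      - 2 * a * sin th * XE3 th al be - deriv (\<lambda>t. Xth th t be) al) (at th)"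
    unfolding skew DERIV_imp_deriv[OF d_al] XE3_def by (auto elim!: DERIV_cong)
qed

lemma Killing_al_al:
  "((\<lambda>t. Xal th t be) has_real_derivative - (a * cos th) * XE1 th al be) (at al)"
proof -
  let ?D = "frechet_derivative X (at (Psi a th al be))"
  have k: "?D (Psi_al a th al) \<bullet> Psi_al a th al = 0"
    using Killing_X_partials[of "Psi_al a th al" th al be "Psi_al a th al"] by simp
  show ?thesis unfolding Xal_def
    by (rule DERIV_cong[OF has_real_derivative_inner_comp[OF X_has_derivative_Psi Psi_d_al Psi_al_d_al]])
      (simp add: k XE1_def)
qed

lemma Killing_th_be:
  "((\<lambda>t. Xth th al t) has_real_derivative deriv (\<lambda>t. Xth th al t) be) (at be)"
  "((\<lambda>t. Xbe t al be) has_real_derivative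
    2 * cos th * XE4 th al be - deriv (\<lambda>t. Xth th al t) be) (at th)"
proof -
  let ?D = "frechet_derivative X (at (Psi a th al be))"
  have skew: "?D (Psi_th a th al be) \<bullet> Psi_be th be = - (?D (Psi_be th be) \<bullet> Psi_th a th al be)"
    using Killing_X_partials[of "Psi_th a th al be" th al be "Psi_be th be"] by simp
  have d_be: "((\<lambda>t. Xth th al t) has_real_derivative
      ?D (Psi_be th be) \<bullet> Psi_th a th al be + X (Psi a th al be) \<bullet> cos th *\<^sub>R E4 be) (at be)"
    unfolding Xth_def by (rule has_real_derivative_inner_comp[OF X_has_derivative_Psi Psi_d_be Psi_th_d_be])
  then show "((\<lambda>t. Xth th al t) has_real_derivative deriv (\<lambda>t. Xth th al t) be) (at be)"
    using DERIV_imp_deriv by metis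
  have "((\<lambda>t. Xbe t al be) has_real_derivative
      ?D (Psi_th a th al be) \<bullet> Psi_be th be + X (Psi a th al be) \<bullet> cos th *\<^sub>R E4 be) (at th)"
    unfolding Xbe_def by (rule has_real_derivative_inner_comp[OF X_has_derivative_Psi Psi_d_th Psi_be_d_th])
  then show "((\<lambda>t. Xbe t al be) has_real_derivative
      2 * cos th * XE4 th al be - deriv (\<lambda>t. Xth th al t) be) (at th)"
    unfolding skew DERIV_imp_deriv[OF d_be] XE4_def by (auto elim!: DERIV_cong)
qed

lemma Killing_be_be:
  "((\<lambda>t. Xbe th al t) has_real_derivative - sin th * XE2 th al be) (at be)"
proof -
  let ?D = "frechet_derivative X (at (Psi a th al be))"
  have k: "?D (Psi_be th be) \<bullet> Psi_be th be = 0"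
    using Killing_X_partials[of "Psi_be th be" th al be "Psi_be th be"] by simp
  show ?thesis unfolding Xbe_def
    by (rule DERIV_cong[OF has_real_derivative_inner_comp[OF X_has_derivative_Psi Psi_d_be Psi_be_d_be]])
      (simp add: k XE2_def)
qed

lemma Killing_al_be:
  "((\<lambda>t. Xal th al t) has_real_derivative deriv (\<lambda>t. Xal th al t) be) (at be)"
  "((\<lambda>t. Xbe th t be) has_real_derivative - deriv (\<lambda>t. Xal th al t) be) (at al)"
proof -
  let ?D = "frechet_derivative X (at (Psi a th al be))"
  have skew: "?D (Psi_al a th al) \<bullet> Psi_be th be = - (?D (Psi_be th be) \<bullet> Psi_al a th al)"
    using Killing_X_partials[of "Psi_al a th al" th al be "Psi_be th be"] by simp
  have d_be: "((\<lambda>t. Xal th al t) has_real_derivative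
      ?D (Psi_be th be) \<bullet> Psi_al a th al + X (Psi a th al be) \<bullet> 0) (at be)"
    unfolding Xal_def
    by (rule has_real_derivative_inner_comp[OF X_has_derivative_Psi Psi_d_be has_vector_derivative_const])
  then show "((\<lambda>t. Xal th al t) has_real_derivative deriv (\<lambda>t. Xal th al t) be) (at be)"
    using DERIV_imp_deriv by metis
  have "((\<lambda>t. Xbe th t be) has_real_derivative
      ?D (Psi_al a th al) \<bullet> Psi_be th be + X (Psi a th al be) \<bullet> 0) (at al)"
    unfolding Xbe_def
    by (rule has_real_derivative_inner_comp[OF X_has_derivative_Psi Psi_d_al has_vector_derivative_const])
  then show "((\<lambda>t. Xbe th t be) has_real_derivative - deriv (\<lambda>t. Xal th al t) be) (at al)"
    unfolding skew DERIV_imp_deriv[OF d_be] by (auto elim!: DERIV_cong)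
qed

lemma XE3_XE4_differentiable:
  "((\<lambda>t. XE3 t al be) has_real_derivative deriv (\<lambda>t. XE3 t al be) th) (at th)"
  "((\<lambda>t. XE4 t al be) has_real_derivative deriv (\<lambda>t. XE4 t al be) th) (at th)"
  unfolding XE3_def XE4_def
  using has_real_derivative_inner_comp[OF X_has_derivative_Psi Psi_d_th has_vector_derivative_const]
  by (metis DERIV_imp_deriv)+

lemma XE1_eq_Xth: "XE1 th al be = - (a * sin th) * Xth th al be / (rho a th)^2"
  and XE2_eq_Xth: "XE2 th al be = cos th * Xth th al be / (rho a th)^2"
proof -
  have r: "(rho a th)^2 \<noteq> 0" using rho_pos[OF a_nonzero, of th] by simp
  have t: "cos th * XE1 th al be + a * sin th * XE2 th al be = 0" by (rule X_tangent_frame)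
  have h: "Xth th al be = - (a * sin th) * XE1 th al be + cos th * XE2 th al be" by (rule Xth_frame)
  have s: "(sin th)^2 + (cos th)^2 = 1" by simp
  have "(rho a th)^2 * XE1 th al be = - (a * sin th) * Xth th al be"
    unfolding rho_squared h using t s by algebra
  then show "XE1 th al be = - (a * sin th) * Xth th al be / (rho a th)^2"
    using r by (simp add: field_simps)
  have "(rho a th)^2 * XE2 th al be = cos th * Xth th al be"
    unfolding rho_squared h using t s by algebra
  then show "XE2 th al be = cos th * Xth th al be / (rho a th)^2"
    using r by (simp add: field_simps)
qed

lemma Xth_eq_rho: "Xth th al be = rho a th * Xth 0 al be"
proof -
  have "\<exists>c. \<forall>t\<in>UNIV. Xth t al be / rho a t = c"
  proof (rule has_field_derivative_zero_constant)
    fix t :: real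
    have r: "rho a t > 0" using rho_pos[OF a_nonzero] .
    have "((\<lambda>t. Xth t al be / rho a t) has_real_derivative
      (- (a * cos t * XE1 t al be + sin t * XE2 t al be) * rho a t
        - Xth t al be * ((a^2 - 1) * sin t * cos t / rho a t)) / (rho a t * rho a t)) (at t)"
      by (rule DERIV_divide[OF Killing_th_th rho_has_real_derivative[OF a_nonzero]]) (use r in simp)
    moreover have "- (a * cos t * XE1 t al be + sin t * XE2 t al be) * rho a t
        - Xth t al be * ((a^2 - 1) * sin t * cos t / rho a t) = 0"
      unfolding XE1_eq_Xth XE2_eq_Xth using r by (simp add: field_simps power2_eq_square)
    ultimately show "((\<lambda>t. Xth t al be / rho a t) has_real_derivative 0) (at t within UNIV)"
      by simp
  qed simp
  then obtain c where "\<And>t. Xth t al be / rho a t = c" by blast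
  from this[of th] this[of 0] show ?thesis
    using rho_pos[OF a_nonzero, of th] by (simp add: field_simps)
qed

text \<open>Integrating the (\<theta>,\<alpha>)-component: with Xal = a cos \<theta> XE3 it reads
  \<partial>(Xal / cos^2)/\<partial>\<theta> = - \<rho> / cos^2 \<partial>Xth(0)/\<partial>\<alpha>.\<close>

lemma Xal_eq_prim:
  assumes t: "t \<in> {-1..1}"
  shows "Xal t al be = (cos t)^2 * (Xal 0 al be - deriv (\<lambda>s. Xth 0 s be) al * rho_sec2_prim a t)"
proof -
  define f' where "f' = deriv (\<lambda>s. Xth 0 s be) al"
  have "\<exists>k. \<forall>x\<in>{-1..1}. Xal x al be / (cos x)^2 + f' * rho_sec2_prim a x = k"
  proof (rule has_field_derivative_zero_constant)
    fix x :: real assume x: "x \<in> {-1..1}"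
    have c: "cos x > 0" using cos_gt_zero_unit_interval[OF x] .
    have "deriv (\<lambda>t. Xth x t be) al = rho a x * f'"
      by (rule DERIV_imp_deriv) (unfold f'_def Xth_eq_rho[of x], rule DERIV_cmult[OF Killing_th_al(1)])
    from Killing_th_al(2)[of al be x, unfolded this]
    have dXal: "((\<lambda>t. Xal t al be) has_real_derivative
        - 2 * a * sin x * XE3 x al be - rho a x * f') (at x)" .
    have dcos2: "((\<lambda>t. (cos t)^2) has_real_derivative 2 * cos x * (- sin x)) (at x)"
      by (rule derivative_eq_intros refl | simp)+
    have "(cos x)^2 \<noteq> 0" using c by simp
    from has_field_derivative_at_within[OF DERIV_divide[OF dXal dcos2 this]]
    have "((\<lambda>t. Xal t al be / (cos t)^2 + f' * rho_sec2_prim a t) has_real_derivative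
      ((- 2 * a * sin x * XE3 x al be - rho a x * f') * (cos x)^2 - Xal x al be * (2 * cos x * (- sin x)))
        / ((cos x)^2 * (cos x)^2) + f' * rho_sec2 a x) (at x within {-1..1})"
      by (rule DERIV_add[OF _ DERIV_cmult[OF rho_sec2_prim_has_derivative_within[OF x]]])
    moreover have "((- 2 * a * sin x * XE3 x al be - rho a x * f') * (cos x)^2
        - Xal x al be * (2 * cos x * (- sin x))) / ((cos x)^2 * (cos x)^2) + f' * rho_sec2 a x = 0"
      unfolding Xal_frame rho_sec2_def using c by (simp add: field_simps power2_eq_square)
    ultimately show "((\<lambda>t. Xal t al be / (cos t)^2 + f' * rho_sec2_prim a t) has_real_derivative 0)
        (at x within {-1..1})"
      by simp
  qed simp
  then obtain k where k: "\<And>x. x \<in> {-1..1} \<Longrightarrow> Xal x al be / (cos x)^2 + f' * rho_sec2_prim a x = k"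
    by blast
  from k[of 0] k[OF t] have "Xal t al be / (cos t)^2 + f' * rho_sec2_prim a t = Xal 0 al be" by simp
  then show ?thesis unfolding f'_def[symmetric] using cos_gt_zero_unit_interval[OF t] by (simp add: field_simps)
qed

lemma Xal_d_al:
  "((\<lambda>s. Xal t s be) has_real_derivative a^2 * sin t * cos t * Xth 0 al be / rho a t) (at al)"
proof -
  have r: "rho a t > 0" using rho_pos[OF a_nonzero] .
  have "- (a * cos t) * XE1 t al be = a^2 * sin t * cos t * Xth 0 al be / rho a t"
    unfolding XE1_eq_Xth Xth_eq_rho[of t] using r by (simp add: field_simps power2_eq_square)
  then show ?thesis using Killing_al_al[of t be al] by simp
qed

lemma Xth_d_al_prim_has_derivative:
  assumes t: "t \<in> {-1..1}"
  shows "((\<lambda>s. deriv (\<lambda>r. Xth 0 r be) s * rho_sec2_prim a t) has_real_derivative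
    - tan_rho a t * Xth 0 al be) (at al)"
proof -
  have c: "cos t > 0" using cos_gt_zero_unit_interval[OF t] .
  have r: "rho a t > 0" using rho_pos[OF a_nonzero] .
  have "(\<lambda>s. deriv (\<lambda>r. Xth 0 r be) s * rho_sec2_prim a t) = (\<lambda>s. Xal 0 s be - Xal t s be / (cos t)^2)"
  proof
    fix s show "deriv (\<lambda>r. Xth 0 r be) s * rho_sec2_prim a t = Xal 0 s be - Xal t s be / (cos t)^2"
      using Xal_eq_prim[OF t, of s be] c by (simp add: field_simps)
  qed
  moreover have "((\<lambda>s. Xal 0 s be - Xal t s be / (cos t)^2) has_real_derivative
     a^2 * sin 0 * cos 0 * Xth 0 al be / rho a 0
       - (a^2 * sin t * cos t * Xth 0 al be / rho a t) / (cos t)^2) (at al)"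
    by (intro DERIV_diff DERIV_cdivide Xal_d_al)
  ultimately show ?thesis unfolding tan_rho_def
    using c r by (auto elim!: DERIV_cong simp: field_simps power2_eq_square)
qed

lemma Xth_prim_tan_rho_relation:
  "\<exists>c. \<forall>t\<in>{-1..1}. c * rho_sec2_prim a t + tan_rho a t * Xth 0 al be = 0"
proof -
  define I where "I = rho_sec2_prim a (1/2)"
  define c where "c = - tan_rho a (1/2) * Xth 0 al be / I"
  have half: "(1/2::real) \<in> {-1..1}" by simp
  have "I \<noteq> 0" unfolding I_def using rho_sec2_prim_pos[OF a_nonzero, of "1/2"] by simp
  have "((\<lambda>s. deriv (\<lambda>r. Xth 0 r be) s * I / I) has_real_derivative c) (at al)"
    unfolding c_def I_def by (rule DERIV_cdivide[OF Xth_d_al_prim_has_derivative[OF half]])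
  then have "((\<lambda>s. deriv (\<lambda>r. Xth 0 r be) s) has_real_derivative c) (at al)"
    using \<open>I \<noteq> 0\<close> by simp
  then have "((\<lambda>s. deriv (\<lambda>r. Xth 0 r be) s * rho_sec2_prim a t) has_real_derivative
      c * rho_sec2_prim a t) (at al)" for t
    by (rule DERIV_cmult_right)
  then have "c * rho_sec2_prim a t = - tan_rho a t * Xth 0 al be" if "t \<in> {-1..1}" for t
    using DERIV_unique Xth_d_al_prim_has_derivative[OF that] by blast
  then show ?thesis by (auto intro!: exI[of _ c])
qed

context
  assumes a_ne_1: "a \<noteq> 1"
begin

lemma Xth_zero [simp]: "Xth th al be = 0"
proof -
  obtain c where c: "\<forall>t\<in>{-1..1}. c * rho_sec2_prim a t + tan_rho a t * Xth 0 al be = 0"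
    using Xth_prim_tan_rho_relation by blast
  have "Xth 0 al be = 0"
  proof (rule rho_sec2_prim_tan_rho_independent[OF a_pos a_ne_1, of c])
    fix t :: real assume "t \<in> {-1<..<1}"
    then show "c * rho_sec2_prim a t + tan_rho a t * Xth 0 al be = 0" using c by simp
  qed
  then show ?thesis using Xth_eq_rho[of th al be] by simp
qed

lemma XE1_zero [simp]: "XE1 th al be = 0" and XE2_zero [simp]: "XE2 th al be = 0"
  by (simp_all add: XE1_eq_Xth XE2_eq_Xth)

lemma XE3_eq: assumes "0 \<le> th" "th \<le> pi/2" shows "XE3 th al be = cos th * XE3 0 al be"
proof (rule cos_ode_solution[OF XE3_XE4_differentiable(1) _ assms])
  fix t
  have "((\<lambda>t. a * cos t * XE3 t al be) has_real_derivative
      a * (- sin t) * XE3 t al be + a * cos t * deriv (\<lambda>t. XE3 t al be) t) (at t)"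
    by (rule derivative_eq_intros refl XE3_XE4_differentiable | simp)+
  moreover have "((\<lambda>t. a * cos t * XE3 t al be) has_real_derivative - 2 * a * sin t * XE3 t al be) (at t)"
    using Killing_th_al(2)[of al be t] by (simp add: Xal_frame)
  ultimately have "a * (- sin t) * XE3 t al be + a * cos t * deriv (\<lambda>t. XE3 t al be) t
      = - 2 * a * sin t * XE3 t al be"
    by (rule DERIV_unique)
  then have "a * (cos t * deriv (\<lambda>t. XE3 t al be) t) = a * (- sin t * XE3 t al be)"
    by (simp add: algebra_simps)
  then show "cos t * deriv (\<lambda>t. XE3 t al be) t = - sin t * XE3 t al be"
    using mult_left_cancel[OF a_nonzero] by blast
qed

lemma XE4_eq: assumes "0 \<le> th" "th \<le> pi/2" shows "XE4 th al be = sin th * XE4 (pi/2) al be"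
proof (rule sin_ode_solution[OF XE3_XE4_differentiable(2) _ assms])
  fix t
  have "((\<lambda>t. sin t * XE4 t al be) has_real_derivative
      cos t * XE4 t al be + sin t * deriv (\<lambda>t. XE4 t al be) t) (at t)"
    by (rule derivative_eq_intros refl XE3_XE4_differentiable | simp)+
  moreover have "((\<lambda>t. sin t * XE4 t al be) has_real_derivative 2 * cos t * XE4 t al be) (at t)"
    using Killing_th_be(2)[of al be t] by (simp add: Xbe_frame)
  ultimately have "cos t * XE4 t al be + sin t * deriv (\<lambda>t. XE4 t al be) t = 2 * cos t * XE4 t al be"
    by (rule DERIV_unique)
  then show "sin t * deriv (\<lambda>t. XE4 t al be) t = cos t * XE4 t al be"
    by simp
qed

lemma Xal_xy_circle_const: "Xal 0 al be = Xal 0 0 0"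
proof -
  have "((\<lambda>t. Xal 0 al t) has_real_derivative 0) (at x)" for al x
  proof -
    have "((\<lambda>t. Xbe 0 t x) has_real_derivative - deriv (\<lambda>t. Xal 0 al t) x) (at al)"
      by (rule Killing_al_be(2))
    moreover have "((\<lambda>t. Xbe 0 t x) has_real_derivative 0) (at al)"
      by (simp add: Xbe_frame)
    ultimately have "deriv (\<lambda>t. Xal 0 al t) x = 0"
      using DERIV_unique by fastforce
    then show ?thesis using Killing_al_be(1)[of 0 al x] by simp
  qed
  moreover have "((\<lambda>t. Xal 0 t be) has_real_derivative 0) (at x)" for be x
    using Killing_al_al[of 0 be x] by simp
  ultimately show ?thesis by (metis DERIV_isconst_all)
qed

lemma Xbe_zw_circle_const: "Xbe (pi/2) al be = Xbe (pi/2) 0 0"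
proof -
  have "((\<lambda>t. Xbe (pi/2) t be) has_real_derivative 0) (at x)" for be x
  proof -
    have "(\<lambda>t. Xal (pi/2) x t) = (\<lambda>t. 0)" by (simp add: Xal_frame)
    then show ?thesis using Killing_al_be(2)[of "pi/2" be x] by simp
  qed
  moreover have "((\<lambda>t. Xbe (pi/2) al t) has_real_derivative 0) (at x)" for al x
    using Killing_be_be[of "pi/2" al x] by simp
  ultimately show ?thesis by (metis DERIV_isconst_all)
qed

lemma X_Psi_eq_rot_field:
  assumes "0 \<le> th" "th \<le> pi/2"
  shows "X (Psi a th al be) = rot_field (Xal 0 0 0 / a^2) (Xbe (pi/2) 0 0) (Psi a th al be)"
proof -
  have "X (Psi a th al be) = XE1 th al be *\<^sub>R E1 al + XE2 th al be *\<^sub>R E2 be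
      + XE3 th al be *\<^sub>R E3 al + XE4 th al be *\<^sub>R E4 be"
    unfolding XE1_def XE2_def XE3_def XE4_def by (rule frame_expansion)
  also have "\<dots> = (cos th * (Xal 0 0 0 / a)) *\<^sub>R E3 al + (sin th * Xbe (pi/2) 0 0) *\<^sub>R E4 be"
    using XE3_eq[OF assms, of al be] XE4_eq[OF assms, of al be]
      Xal_xy_circle_const[of al be] Xbe_zw_circle_const[of al be] a_nonzero
    by (simp add: Xal_frame Xbe_frame)
  also have "\<dots> = rot_field (Xal 0 0 0 / a^2) (Xbe (pi/2) 0 0) (Psi a th al be)"
    unfolding rot_field_def d_xi_def d_mu_def coordinate_defs
    using a_nonzero by (simp add: vec4_eq_iff field_simps power2_eq_square)
  finally show ?thesis .
qed

lemma Killing_imp_eq_rot_field: "\<exists>c1 c2. \<forall>p\<in>Ma a. X p = rot_field c1 c2 p"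
proof (intro exI ballI)
  fix p assume "p \<in> Ma a"
  then obtain th al be where "0 \<le> th" "th \<le> pi/2" "p = Psi a th al be"
    using Psi_onto_Ma[OF a_pos] by blast
  then show "X p = rot_field (Xal 0 0 0 / a^2) (Xbe (pi/2) 0 0) p"
    using X_Psi_eq_rot_field by blast
qed

end

end

theorem lemma5p1:
  fixes a :: real
  assumes "a > 0" and "a \<noteq> 1"
  shows "Killing a d_xi \<and> Killing a d_mu
     \<and> (\<forall>c1 c2. (\<forall>p\<in>Ma a. c1 *\<^sub>R d_xi p + c2 *\<^sub>R d_mu p = 0) \<longrightarrow> c1 = 0 \<and> c2 = 0)
     \<and> (\<forall>X. Killing a X \<longleftrightarrow>
          (vector_field a X \<and> (\<exists>c1 c2. \<forall>p\<in>Ma a. X p = c1 *\<^sub>R d_xi p + c2 *\<^sub>R d_mu p)))"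
proof -
  have a: "a \<noteq> 0" using assms(1) by simp
  have "d_xi = rot_field 1 0" "d_mu = rot_field 0 1"
    unfolding rot_field_def by (auto simp: fun_eq_iff)
  then have "Killing a d_xi" "Killing a d_mu"
    using Killing_if_eq_rot_field[OF a vector_field_rot_field] by metis+
  moreover have "Killing a X \<longleftrightarrow> vector_field a X \<and> (\<exists>c1 c2. \<forall>p\<in>Ma a. X p = rot_field c1 c2 p)" for X
    using vector_field_X[OF assms(1)] Killing_imp_eq_rot_field[OF assms(1) _ assms(2)]
      Killing_if_eq_rot_field[OF a] by blast
  ultimately show ?thesis
    using rot_field_vanishing[OF a] unfolding rot_field_def by blast
qed

end
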